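(* Let $f(x)=\frac1n\sum_{i=1}^nf_i(x)$ on $\mathbb{R}^d$ where each $f_i$ is $\mu_i$-strongly convex and $L_i$-smooth, and let $x^*$ be the minimizer of $f$. Consider SGD with the DecSPS stepsize (defined in the context) with $c_k=\sqrt{k+1}$ for $k\ge0$ and $c_{-1}=c_0$. Then almost surely, for all $k\in\mathbb{N}$, $\|x^k-x^*\|^2\le D^2_{\max}$, where $$D^2_{\max}:=\max\left\{\|x^0-x^*\|^2,\ \frac{2c_0\gamma_b\hat\sigma^2_{B,\max}}{\min\left\{\frac{\mu_{\min}}{2L_{\max}},\mu_{\min}\gamma_b\right\}}\right\},$$ $\mu_{\min}=\min_i\mu_i$ and $L_{\max}=\max_iL_i$.
   Context: Minibatches: fix a batch size $B$; at each iteration a subset $\mathcal S_k\subseteq[n]$ with $|\mathcal S_k|=B$ is sampled (uniformly at random, independently across iterations). For $\mathcal S\subseteq[n]$, $f_{\mathcal S}:=\frac1{|\mathcal S|}\sum_{i\in\mathcal S}f_i$, $f^*_{\mathcal S}:=\inf_xf_{\mathcal S}(x)$, and $\ell^*_{\mathcal S}$ is a given real number with $\ell^*_{\mathcal S}\le f^*_{\mathcal S}$. SGD: $x^{k+1}=x^k-\gamma_k\nabla f_{\mathcal S_k}(x^k)$. DecSPS stepsize: $\gamma_k:=\frac1{c_k}\min\left\{\frac{f_{\mathcal S_k}(x^k)-\ell^*_{\mathcal S_k}}{\|\nabla f_{\mathcal S_k}(x^k)\|^2},\ c_{k-1}\gamma_{k-1}\right\}$ for $k\ge0$, with $c_{-1}=c_0$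 and $\gamma_{-1}=\gamma_b>0$ a fixed constant; if $\nabla f_{\mathcal S_k}(x^k)=0$ the iterate is not updated. $\hat\sigma^2_{B,\max}:=\max_{\mathcal S\subseteq[n],|\mathcal S|=B}[f_{\mathcal S}(x^* )-\ell^*_{\mathcal S}]$. *)

theory Defs
  imports "HOL-Analysis.Analysis"
begin

definition strongly_convex :: "real \<Rightarrow> ('a::real_inner \<Rightarrow> real) \<Rightarrow> bool" where
  "strongly_convex \<mu> f \<longleftrightarrow> \<mu> > 0 \<and> convex_on UNIV (\<lambda>x. f x - \<mu> / 2 * (norm x)\<^sup>2)"

definition smooth_with_grad :: "real \<Rightarrow> ('a::real_inner \<Rightarrow> real) \<Rightarrow> ('a \<Rightarrow> 'a) \<Rightarrow> bool" where
  "smooth_with_grad L f g \<longleftrightarrow> L > 0 \<and>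
     (\<forall>x. (f has_derivative (\<lambda>h. g x \<bullet> h)) (at x)) \<and>
     (\<forall>x y. norm (g x - g y) \<le> L * norm (x - y))"

definition fS :: "(nat \<Rightarrow> 'a \<Rightarrow> real) \<Rightarrow> nat set \<Rightarrow> 'a \<Rightarrow> real" where
  "fS f S x = (\<Sum>i\<in>S. f i x) / real (card S)"

definition gS :: "(nat \<Rightarrow> 'a \<Rightarrow> 'a::real_vector) \<Rightarrow> nat set \<Rightarrow> 'a \<Rightarrow> 'a" where
  "gS g S x = (1 / real (card S)) *\<^sub>R (\<Sum>i\<in>S. g i x)"

definition cdec :: "nat \<Rightarrow> real" where
  "cdec k = sqrt (real k + 1)"

definition cprev :: "nat \<Rightarrow> real" where
  "cprev k = (if k = 0 then cdec 0 else cdec (k - 1))"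

text \<open>SGD with DecSPS. decsps f g ell Ss x0 gb k = (x^k, gamma_{k-1}), where
  Ss k is the minibatch S_k, ell S is the lower bound for f_S^*, gamma_{-1} = gb.
  If the minibatch gradient vanishes the iterate is not updated and the
  Polyak ratio is read as +infinity (so gamma_k = c_{k-1} gamma_{k-1} / c_k).\<close>
fun decsps :: "(nat \<Rightarrow> 'a \<Rightarrow> real) \<Rightarrow> (nat \<Rightarrow> 'a \<Rightarrow> 'a::real_inner) \<Rightarrow> (nat set \<Rightarrow> real)
      \<Rightarrow> (nat \<Rightarrow> nat set) \<Rightarrow> 'a \<Rightarrow> real \<Rightarrow> nat \<Rightarrow> 'a \<times> real" where
  "decsps f g ell Ss x0 gb 0 = (x0, gb)"
| "decsps f g ell Ss x0 gb (Suc k) =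
     (let (x, gp) = decsps f g ell Ss x0 gb k;
          S = Ss k;
          d = gS g S x
      in if d = 0 then (x, cprev k * gp / cdec k)
         else (let \<gamma> = (1 / cdec k) * min ((fS f S x - ell S) / (norm d)\<^sup>2) (cprev k * gp)
               in (x - \<gamma> *\<^sub>R d, \<gamma>)))"

definition sigma_Bmax :: "nat \<Rightarrow> nat \<Rightarrow> (nat \<Rightarrow> 'a \<Rightarrow> real) \<Rightarrow> (nat set \<Rightarrow> real) \<Rightarrow> 'a \<Rightarrow> real" where
  "sigma_Bmax n B f ell xs = Max {fS f S xs - ell S | S. S \<subseteq> {..<n} \<and> card S = B}"

end

theory Submission
  imports Defs
begin

(* Write mu = mu_min and sigma = sigma_{B,max}^2.  Strong convexity of the minibatch loss f_S
   around xstar and the Polyak cap gamma_k * norm (grad f_S (x^k))^2 <= f_S (x^k) - ell S give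

     norm (x^(k+1) - xstar)^2 <= (1 - mu * gamma_k) * norm (x^k - xstar)^2 + 2 * gamma_k * sigma.

   Since c_k gamma_k <= c_(k-1) gamma_(k-1) and c_k >= 1, every stepsize is at most gamma_b.  Hence
   any D with 2 sigma <= mu D and 2 gamma_b sigma <= D is an invariant bound: if mu gamma_k <= 1 the
   right-hand side is a convex combination of numbers <= D, otherwise it is at most 2 gamma_b sigma.
   As mu_min <= L_max, D^2_max is such a D. *)

lemma convex_on_UNIV_above_tangent:
  fixes h :: "'a::real_normed_vector \<Rightarrow> real"
  assumes convex: "convex_on UNIV h" and deriv: "(h has_derivative h') (at x)"
  shows "h x + h' (y - x) \<le> h y"
proof -
  define \<phi> where "\<phi> t = h (x + t *\<^sub>R (y - x))" for t :: real
  have "convex_on UNIV \<phi>"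
  proof (rule convex_onI[rotated, OF convex_UNIV])
    fix t a b :: real assume "0 < t" "t < 1"
    have "x + ((1 - t) *\<^sub>R a + t *\<^sub>R b) *\<^sub>R (y - x)
        = (1 - t) *\<^sub>R (x + a *\<^sub>R (y - x)) + t *\<^sub>R (x + b *\<^sub>R (y - x))"
      by (simp add: algebra_simps)
    then show "\<phi> ((1 - t) *\<^sub>R a + t *\<^sub>R b) \<le> (1 - t) * \<phi> a + t * \<phi> b"
      unfolding \<phi>_def using convex_onD[OF convex, of t] \<open>0 < t\<close> \<open>t < 1\<close> by simp
  qed
  moreover have "(\<phi> has_field_derivative h' (y - x)) (at 0)"
  proof -
    have "((\<lambda>t::real. x + t *\<^sub>R (y - x)) has_derivative (\<lambda>t. t *\<^sub>R (y - x))) (at 0)"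
      by (auto intro!: derivative_eq_intros)
    then have "(\<phi> has_derivative (\<lambda>t. h' (t *\<^sub>R (y - x)))) (at 0)"
      unfolding \<phi>_def using deriv by (auto intro: has_derivative_compose)
    moreover have "(\<lambda>t. h' (t *\<^sub>R (y - x))) = (*) (h' (y - x))"
      using linear_scale[OF has_derivative_linear[OF deriv]] by (auto simp: mult.commute)
    ultimately show ?thesis by (simp add: has_field_derivative_def)
  qed
  ultimately have "\<phi> 1 - \<phi> 0 \<ge> h' (y - x) * (1 - 0)"
    by (intro convex_on_imp_above_tangent) auto
  then show ?thesis unfolding \<phi>_def by simp
qed

lemma strongly_convex_gradient_inequality:
  fixes f :: "'a::real_inner \<Rightarrow> real"
  assumes sc: "strongly_convex \<mu> f" and deriv: "(f has_derivative (\<lambda>h. g \<bullet> h)) (at x)"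
  shows "f x + g \<bullet> (y - x) + \<mu> / 2 * (norm (y - x))\<^sup>2 \<le> f y"
proof -
  define h where "h z = f z - \<mu> / 2 * (z \<bullet> z)" for z
  have "convex_on UNIV h"
    using sc unfolding strongly_convex_def h_def by (simp add: power2_norm_eq_inner)
  moreover have "(h has_derivative (\<lambda>v. g \<bullet> v - \<mu> / 2 * (x \<bullet> v + v \<bullet> x))) (at x)"
    unfolding h_def by (auto intro!: derivative_eq_intros deriv)
  ultimately have "h x + (g \<bullet> (y - x) - \<mu> / 2 * (x \<bullet> (y - x) + (y - x) \<bullet> x)) \<le> h y"
    by (rule convex_on_UNIV_above_tangent)
  moreover have "\<mu> / 2 * (norm (y - x))\<^sup>2 = \<mu> / 2 * (y \<bullet> y) - \<mu> * (x \<bullet> y) + \<mu> / 2 * (x \<bullet> x)"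
    by (simp add: power2_norm_eq_inner inner_diff_left inner_diff_right inner_commute algebra_simps)
  ultimately show ?thesis
    unfolding h_def by (simp add: inner_diff_left inner_diff_right inner_commute algebra_simps)
qed

lemma strongly_convex_modulus_le_smoothness:
  fixes f :: "'a::euclidean_space \<Rightarrow> real"
  assumes sc: "strongly_convex \<mu> f" and sm: "smooth_with_grad L f g"
  shows "\<mu> \<le> L"
proof -
  have deriv: "\<And>x. (f has_derivative (\<lambda>h. g x \<bullet> h)) (at x)"
    and lip: "\<And>x y. norm (g x - g y) \<le> L * norm (x - y)"
    using sm unfolding smooth_with_grad_def by auto
  obtain b :: 'a where "b \<in> Basis" using nonempty_Basis by blast
  then have "norm b = 1" by simp
  have "f b + g b \<bullet> (0 - b) + \<mu> / 2 * (norm (0 - b))\<^sup>2 \<le> f 0"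
    and "f 0 + g 0 \<bullet> (b - 0) + \<mu> / 2 * (norm (b - 0))\<^sup>2 \<le> f b"
    by (intro strongly_convex_gradient_inequality[OF sc deriv])+
  then have "\<mu> \<le> (g b - g 0) \<bullet> b" using \<open>norm b = 1\<close> by (simp add: inner_diff_left)
  also have "\<dots> \<le> norm (g b - g 0) * norm b" by (rule norm_cauchy_schwarz)
  also have "\<dots> \<le> L" using lip[of b 0] \<open>norm b = 1\<close> by simp
  finally show ?thesis .
qed

lemma Min_modulus_pos_le_Max_smoothness:
  fixes f :: "nat \<Rightarrow> 'a::euclidean_space \<Rightarrow> real"
  assumes "finite I" "I \<noteq> {}"
    and sc: "\<And>i. i \<in> I \<Longrightarrow> strongly_convex (\<mu> i) (f i)"
    and sm: "\<And>i. i \<in> I \<Longrightarrow> smooth_with_grad (L i) (f i) (g i)"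
  shows "0 < Min (\<mu> ` I)" and "Min (\<mu> ` I) \<le> Max (L ` I)"
proof -
  show "0 < Min (\<mu> ` I)"
    using assms(1,2) sc by (subst Min_gr_iff) (auto simp: strongly_convex_def)
  obtain i where "i \<in> I" using assms(2) by blast
  have "Min (\<mu> ` I) \<le> \<mu> i" using assms(1) \<open>i \<in> I\<close> by simp
  also have "\<mu> i \<le> L i" by (rule strongly_convex_modulus_le_smoothness[OF sc sm]) (use \<open>i \<in> I\<close> in simp_all)
  also have "L i \<le> Max (L ` I)" using assms(1) \<open>i \<in> I\<close> by simp
  finally show "Min (\<mu> ` I) \<le> Max (L ` I)" .
qed

lemma strongly_convex_lower_bound:
  fixes f :: "'a::real_inner \<Rightarrow> real"
  assumes sc: "strongly_convex \<mu> f" and deriv: "(f has_derivative (\<lambda>h. g \<bullet> h)) (at 0)"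
  shows "f 0 - (norm g)\<^sup>2 / (2 * \<mu>) \<le> f y"
proof -
  have "\<mu> > 0" using sc unfolding strongly_convex_def by simp
  have "f 0 + g \<bullet> y + \<mu> / 2 * (norm y)\<^sup>2 \<le> f y"
    using strongly_convex_gradient_inequality[OF sc deriv, of y] by simp
  moreover have "- (norm g * norm y) \<le> g \<bullet> y"
    using norm_cauchy_schwarz[of "- g" y] by simp
  moreover have "0 \<le> (\<mu> * norm y - norm g)\<^sup>2 / (2 * \<mu>)" using \<open>\<mu> > 0\<close> by simp
  moreover have "(\<mu> * norm y - norm g)\<^sup>2 / (2 * \<mu>)
      = \<mu> / 2 * (norm y)\<^sup>2 - norm g * norm y + (norm g)\<^sup>2 / (2 * \<mu>)"
    using \<open>\<mu> > 0\<close> by (simp add: field_simps power2_eq_square)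
  ultimately show ?thesis by linarith
qed

lemma fS_bdd_below:
  assumes "finite S"
    and sc: "\<And>i. i \<in> S \<Longrightarrow> strongly_convex (\<mu> i) (f i)"
    and deriv: "\<And>i. i \<in> S \<Longrightarrow> (f i has_derivative (\<lambda>h. g i \<bullet> h)) (at 0)"
  shows "bdd_below (range (fS f S))"
proof (rule bdd_belowI2)
  fix y
  have "(\<Sum>i\<in>S. f i 0 - (norm (g i))\<^sup>2 / (2 * \<mu> i)) \<le> (\<Sum>i\<in>S. f i y)"
    by (intro sum_mono strongly_convex_lower_bound[OF sc deriv])
  then show "(\<Sum>i\<in>S. f i 0 - (norm (g i))\<^sup>2 / (2 * \<mu> i)) / real (card S) \<le> fS f S y"
    unfolding fS_def by (simp add: divide_right_mono)
qed

lemma fS_gradient_inequality: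
  fixes f :: "nat \<Rightarrow> 'a::real_inner \<Rightarrow> real"
  assumes "finite S" "S \<noteq> {}"
    and sc: "\<And>i. i \<in> S \<Longrightarrow> strongly_convex (\<mu> i) (f i)"
    and deriv: "\<And>i. i \<in> S \<Longrightarrow> (f i has_derivative (\<lambda>h. g i x \<bullet> h)) (at x)"
    and m_le: "\<And>i. i \<in> S \<Longrightarrow> m \<le> \<mu> i"
  shows "fS f S x - fS f S y + m / 2 * (norm (x - y))\<^sup>2 \<le> gS g S x \<bullet> (x - y)"
proof -
  have card_pos: "real (card S) > 0" using assms(1,2) by (simp add: card_gt_0_iff)
  have "f i x - f i y + m / 2 * (norm (x - y))\<^sup>2 \<le> g i x \<bullet> (x - y)" if "i \<in> S" for i
  proof -
    have "m / 2 * (norm (x - y))\<^sup>2 \<le> \<mu> i / 2 * (norm (x - y))\<^sup>2"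
      using m_le[OF that] by (simp add: mult_right_mono)
    then show ?thesis
      using strongly_convex_gradient_inequality[OF sc[OF that] deriv[OF that], of y]
      by (simp add: norm_minus_commute inner_diff_right)
  qed
  then have "(\<Sum>i\<in>S. f i x - f i y + m / 2 * (norm (x - y))\<^sup>2) \<le> (\<Sum>i\<in>S. g i x \<bullet> (x - y))"
    by (rule sum_mono)
  then have "((\<Sum>i\<in>S. f i x) - (\<Sum>i\<in>S. f i y) + real (card S) * (m / 2 * (norm (x - y))\<^sup>2))
      / real (card S) \<le> (\<Sum>i\<in>S. g i x) \<bullet> (x - y) / real (card S)"
    using card_pos by (simp add: sum.distrib sum_subtractf inner_sum_left divide_right_mono)
  then show ?thesis
    unfolding fS_def gS_def using card_pos by (simp add: add_divide_distrib diff_divide_distrib)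
qed

lemma sigma_Bmax_ge:
  assumes "S \<subseteq> {..<n}" "card S = B"
  shows "fS f S xs - ell S \<le> sigma_Bmax n B f ell xs"
proof -
  have "finite {S. S \<subseteq> {..<n} \<and> card S = B}"
    by (rule finite_subset[of _ "Pow {..<n}"]) auto
  then show ?thesis
    unfolding sigma_Bmax_def using assms by (intro Max_ge) auto
qed

lemma polyak_step_dist_le:
  fixes x xs d :: "'a::real_inner"
  assumes "0 \<le> \<gamma>" and polyak: "\<gamma> * (norm d)\<^sup>2 \<le> F - l"
    and grad: "F - Fs + \<mu> / 2 * (norm (x - xs))\<^sup>2 \<le> d \<bullet> (x - xs)"
    and noise: "Fs - l \<le> \<sigma>"
  shows "(norm (x - \<gamma> *\<^sub>R d - xs))\<^sup>2 \<le> (1 - \<mu> * \<gamma>) * (norm (x - xs))\<^sup>2 + 2 * \<gamma> * \<sigma>"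
proof -
  have "(norm (x - \<gamma> *\<^sub>R d - xs))\<^sup>2
      = (norm (x - xs))\<^sup>2 - 2 * \<gamma> * (d \<bullet> (x - xs)) + \<gamma> * (\<gamma> * (norm d)\<^sup>2)"
    by (simp add: power2_norm_eq_inner inner_diff_left inner_diff_right inner_commute algebra_simps)
  also have "\<dots> \<le> (norm (x - xs))\<^sup>2 - 2 * \<gamma> * (F - Fs + \<mu> / 2 * (norm (x - xs))\<^sup>2) + \<gamma> * (F - l)"
    using \<open>0 \<le> \<gamma>\<close> grad polyak by (intro add_mono diff_mono mult_left_mono) auto
  also have "\<dots> = (1 - \<mu> * \<gamma>) * (norm (x - xs))\<^sup>2 + 2 * \<gamma> * (Fs - l) - \<gamma> * (F - l)"
    by (simp add: algebra_simps)
  also have "\<dots> \<le> (1 - \<mu> * \<gamma>) * (norm (x - xs))\<^sup>2 + 2 * \<gamma> * \<sigma>"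
  proof -
    have "0 \<le> \<gamma> * (norm d)\<^sup>2" using \<open>0 \<le> \<gamma>\<close> by simp
    then have "0 \<le> F - l" using polyak by linarith
    then have "0 \<le> \<gamma> * (F - l)" using \<open>0 \<le> \<gamma>\<close> by simp
    moreover have "\<gamma> * (Fs - l) \<le> \<gamma> * \<sigma>" using noise \<open>0 \<le> \<gamma>\<close> by (rule mult_left_mono)
    ultimately show ?thesis by linarith
  qed
  finally show ?thesis .
qed

lemma contraction_with_noise_le:
  fixes r D \<gamma> \<gamma>b \<mu> \<sigma> :: real
  assumes "0 \<le> r" "r \<le> D" "0 \<le> \<gamma>" "\<gamma> \<le> \<gamma>b" "0 \<le> \<sigma>"
    and "2 * \<sigma> \<le> \<mu> * D" "2 * \<gamma>b * \<sigma> \<le> D"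
  shows "(1 - \<mu> * \<gamma>) * r + 2 * \<gamma> * \<sigma> \<le> D"
proof (cases "\<mu> * \<gamma> \<le> 1")
  case True
  have "(1 - \<mu> * \<gamma>) * r \<le> (1 - \<mu> * \<gamma>) * D" using True assms by (simp add: mult_left_mono)
  moreover have "\<gamma> * (2 * \<sigma>) \<le> \<gamma> * (\<mu> * D)" using assms by (simp add: mult_left_mono)
  ultimately show ?thesis by (simp add: algebra_simps)
next
  case False
  then have "(1 - \<mu> * \<gamma>) * r \<le> 0" using assms by (simp add: mult_nonpos_nonneg)
  moreover have "\<gamma> * \<sigma> \<le> \<gamma>b * \<sigma>" using assms by (simp add: mult_right_mono)
  ultimately show ?thesis using assms by linarith
qed

lemma cdec_ge_1: "1 \<le> cdec k"
  unfolding cdec_def by simp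

lemma cprev_ge_1: "1 \<le> cprev k"
  unfolding cprev_def by (simp add: cdec_ge_1)

lemma decsps_stepsize_bounds:
  assumes lower: "\<And>k x. ell (Ss k) \<le> fS f (Ss k) x" and "0 \<le> \<gamma>b"
  shows "0 \<le> snd (decsps f g ell Ss x0 \<gamma>b k) \<and> cprev k * snd (decsps f g ell Ss x0 \<gamma>b k) \<le> \<gamma>b"
proof (induction k)
  case 0
  then show ?case using \<open>0 \<le> \<gamma>b\<close> by (simp add: cprev_def cdec_def)
next
  case (Suc k)
  obtain x \<gamma> where prev: "decsps f g ell Ss x0 \<gamma>b k = (x, \<gamma>)" by fastforce
  have "0 \<le> \<gamma>" "cprev k * \<gamma> \<le> \<gamma>b" using Suc.IH prev by auto
  have "0 \<le> (fS f (Ss k) x - ell (Ss k)) / (norm (gS g (Ss k) x))\<^sup>2" using lower[of k x] by simp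
  moreover have "0 < cdec k" "cprev (Suc k) = cdec k" using cdec_ge_1[of k] by (auto simp: cprev_def)
  ultimately show ?case
    using prev \<open>0 \<le> \<gamma>\<close> \<open>cprev k * \<gamma> \<le> \<gamma>b\<close> cprev_ge_1[of k] by (auto simp: Let_def)
qed

lemma decsps_dist_le:
  fixes xs :: "'a::real_inner"
  assumes lower: "\<And>k x. ell (Ss k) \<le> fS f (Ss k) x"
    and grad: "\<And>k x. fS f (Ss k) x - fS f (Ss k) xs + \<mu> / 2 * (norm (x - xs))\<^sup>2
                  \<le> gS g (Ss k) x \<bullet> (x - xs)"
    and noise: "\<And>k. fS f (Ss k) xs - ell (Ss k) \<le> \<sigma>"
    and "0 \<le> \<gamma>b" and radius: "2 * \<sigma> \<le> \<mu> * D" "2 * \<gamma>b * \<sigma> \<le> D"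
    and start: "(norm (x0 - xs))\<^sup>2 \<le> D"
  shows "(norm (fst (decsps f g ell Ss x0 \<gamma>b k) - xs))\<^sup>2 \<le> D"
proof (induction k)
  case 0
  then show ?case using start by simp
next
  case (Suc k)
  obtain x \<gamma> where prev: "decsps f g ell Ss x0 \<gamma>b k = (x, \<gamma>)" by fastforce
  define S d where "S = Ss k" and "d = gS g S x"
  have IH: "(norm (x - xs))\<^sup>2 \<le> D" using Suc.IH prev by simp
  show ?case
  proof (cases "d = 0")
    case True
    then show ?thesis using prev IH by (simp add: S_def d_def)
  next
    case False
    define \<gamma>' where "\<gamma>' = snd (decsps f g ell Ss x0 \<gamma>b (Suc k))"
    define P where "P = (fS f S x - ell S) / (norm d)\<^sup>2"
    have step: "fst (decsps f g ell Ss x0 \<gamma>b (Suc k)) = x - \<gamma>' *\<^sub>R d"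
      and \<gamma>'_eq: "\<gamma>' = min P (cprev k * \<gamma>) / cdec k"
      using prev False by (simp_all add: \<gamma>'_def P_def S_def d_def Let_def)
    have "0 \<le> \<gamma>'" and "cprev (Suc k) * \<gamma>' \<le> \<gamma>b"
      using decsps_stepsize_bounds[where ell = ell and Ss = Ss and f = f, OF lower \<open>0 \<le> \<gamma>b\<close>]
      unfolding \<gamma>'_def by blast+
    then have "\<gamma>' \<le> \<gamma>b"
      using cprev_ge_1[of "Suc k"] mult_right_mono[of 1 "cprev (Suc k)" \<gamma>'] by linarith
    have "\<gamma>' \<le> P"
    proof -
      have "0 \<le> min P (cprev k * \<gamma>)"
        using \<open>0 \<le> \<gamma>'\<close> cdec_ge_1[of k] unfolding \<gamma>'_eq by (simp add: zero_le_divide_iff)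
      then have "\<gamma>' \<le> min P (cprev k * \<gamma>) / 1"
        unfolding \<gamma>'_eq using cdec_ge_1[of k] by (intro divide_left_mono) auto
      then show ?thesis by simp
    qed
    then have "\<gamma>' * (norm d)\<^sup>2 \<le> fS f S x - ell S"
      using False by (simp add: P_def le_divide_eq)
    then have "(norm (x - \<gamma>' *\<^sub>R d - xs))\<^sup>2 \<le> (1 - \<mu> * \<gamma>') * (norm (x - xs))\<^sup>2 + 2 * \<gamma>' * \<sigma>"
      using \<open>0 \<le> \<gamma>'\<close> grad[of k x] noise[of k]
      by (intro polyak_step_dist_le) (simp_all add: S_def d_def)
    also have "\<dots> \<le> D"
      using noise[of 0] lower[of 0 xs] IH \<open>0 \<le> \<gamma>'\<close> \<open>\<gamma>' \<le> \<gamma>b\<close> radius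
      by (intro contraction_with_noise_le) auto
    finally show ?thesis unfolding step .
  qed
qed

lemma radius_bounds:
  fixes \<mu> L \<gamma>b \<sigma> :: real
  assumes "0 < \<mu>" "\<mu> \<le> L" "0 < \<gamma>b" "0 \<le> \<sigma>"
    and D: "2 * \<gamma>b * \<sigma> / min (\<mu> / (2 * L)) (\<mu> * \<gamma>b) \<le> D"
  shows "2 * \<sigma> \<le> \<mu> * D" and "2 * \<gamma>b * \<sigma> \<le> D"
proof -
  define m where "m = min (\<mu> / (2 * L)) (\<mu> * \<gamma>b)"
  have "0 < m" "m \<le> \<mu> * \<gamma>b" "m \<le> 1" using assms(1-3) by (auto simp: m_def min_le_iff_disj)
  have "2 * \<gamma>b * \<sigma> / (\<mu> * \<gamma>b) \<le> 2 * \<gamma>b * \<sigma> / m"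
    using \<open>0 < m\<close> \<open>m \<le> \<mu> * \<gamma>b\<close> assms(3,4) by (intro divide_left_mono) auto
  then have "\<mu> * (2 * \<gamma>b * \<sigma> / (\<mu> * \<gamma>b)) \<le> \<mu> * D"
    using assms(1) D unfolding m_def by (simp add: mult_left_mono)
  then show "2 * \<sigma> \<le> \<mu> * D" using assms(1,3) by simp
  have "2 * \<gamma>b * \<sigma> / 1 \<le> 2 * \<gamma>b * \<sigma> / m"
    using \<open>0 < m\<close> \<open>m \<le> 1\<close> assms(3,4) by (intro divide_left_mono) auto
  then show "2 * \<gamma>b * \<sigma> \<le> D" using D unfolding m_def by simp
qed

theorem proposition1:
  fixes n B :: nat
    and f :: "nat \<Rightarrow> 'a::euclidean_space \<Rightarrow> real"
    and g :: "nat \<Rightarrow> 'a \<Rightarrow> 'a"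
    and \<mu> L :: "nat \<Rightarrow> real"
    and ell :: "nat set \<Rightarrow> real"
    and Ss :: "nat \<Rightarrow> nat set"
    and x0 xstar :: 'a
    and \<gamma>b :: real
  assumes n_pos: "n \<ge> 1"
    and B_range: "1 \<le> B" "B \<le> n"
    and sc: "\<And>i. i < n \<Longrightarrow> strongly_convex (\<mu> i) (f i)"
    and sm: "\<And>i. i < n \<Longrightarrow> smooth_with_grad (L i) (f i) (g i)"
    and xstar_min: "\<And>x. fS f {..<n} xstar \<le> fS f {..<n} x"
    and ell_le: "\<And>S. S \<subseteq> {..<n} \<Longrightarrow> card S = B \<Longrightarrow> ell S \<le> (INF x. fS f S x)"
    and batches: "\<And>k. Ss k \<subseteq> {..<n} \<and> card (Ss k) = B"
    and gb_pos: "\<gamma>b > 0"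
  shows "\<forall>k. (norm (fst (decsps f g ell Ss x0 \<gamma>b k) - xstar))\<^sup>2 \<le>
           max ((norm (x0 - xstar))\<^sup>2)
               (2 * cdec 0 * \<gamma>b * sigma_Bmax n B f ell xstar /
                 min (Min (\<mu> ` {..<n}) / (2 * Max (L ` {..<n}))) (Min (\<mu> ` {..<n}) * \<gamma>b))"
proof -
  define \<mu>min Lmax \<sigma> where "\<mu>min = Min (\<mu> ` {..<n})" and "Lmax = Max (L ` {..<n})"
    and "\<sigma> = sigma_Bmax n B f ell xstar"
  define D where "D = max ((norm (x0 - xstar))\<^sup>2)
    (2 * cdec 0 * \<gamma>b * \<sigma> / min (\<mu>min / (2 * Lmax)) (\<mu>min * \<gamma>b))"
  have deriv: "\<And>i x. i < n \<Longrightarrow> (f i has_derivative (\<lambda>h. g i x \<bullet> h)) (at x)"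
    using sm unfolding smooth_with_grad_def by auto
  have batch: "finite (Ss j)" "Ss j \<noteq> {}" "\<And>i. i \<in> Ss j \<Longrightarrow> i < n" for j
    using batches[of j] B_range by (auto intro: finite_subset)
  have "0 < \<mu>min \<and> \<mu>min \<le> Lmax"
    unfolding \<mu>min_def Lmax_def using n_pos sc sm
    by (intro conjI Min_modulus_pos_le_Max_smoothness[where f = f and g = g])
       (auto simp: lessThan_empty_iff)
  then have "0 < \<mu>min" "\<mu>min \<le> Lmax" by simp_all
  have lower: "ell (Ss j) \<le> fS f (Ss j) x" for j x
  proof -
    have "bdd_below (range (fS f (Ss j)))"
      using batch sc deriv by (intro fS_bdd_below[where \<mu> = \<mu> and g = "\<lambda>i. g i 0"]) auto
    then show ?thesis using ell_le batches by (meson cINF_lower UNIV_I order_trans)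
  qed
  have grad: "fS f (Ss j) x - fS f (Ss j) xstar + \<mu>min / 2 * (norm (x - xstar))\<^sup>2
      \<le> gS g (Ss j) x \<bullet> (x - xstar)" for j x
    unfolding \<mu>min_def using batch sc deriv by (intro fS_gradient_inequality[where \<mu> = \<mu>]) auto
  have noise: "fS f (Ss j) xstar - ell (Ss j) \<le> \<sigma>" for j
    unfolding \<sigma>_def using batches by (intro sigma_Bmax_ge) auto
  have "0 \<le> \<sigma>" using noise[of 0] lower[of 0 xstar] by simp
  then have "2 * \<sigma> \<le> \<mu>min * D" "2 * \<gamma>b * \<sigma> \<le> D"
    using radius_bounds[OF \<open>0 < \<mu>min\<close> \<open>\<mu>min \<le> Lmax\<close> gb_pos] by (auto simp: D_def cdec_def)
  then have "(norm (fst (decsps f g ell Ss x0 \<gamma>b k) - xstar))\<^sup>2 \<le> D" for k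
    using lower grad noise gb_pos by (intro decsps_dist_le) (auto simp: D_def)
  then show ?thesis unfolding D_def \<mu>min_def Lmax_def \<sigma>_def by blast
qed

end
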